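(* Let $K\in\mathcal{K}$ and let $L_0\in\mathbb{R}^{q\times n}$ be such that $A_K+DL_0$ is Hurwitz. Define recursively, for $j=0,1,2,\dots$, $P^{j}$ as the solution of $$(A_K+DL_j)^\top P^{j}+P^{j}(A_K+DL_j)+Q_K-\gamma^2L_j^\top L_j=0,$$ and $L_{j+1}=\gamma^{-2}D^\top P^{j}$. Then there exists $\beta(K)\in[0,1)$ such that $\mathrm{Tr}(P_K-P^{j+1})\le\beta(K)\,\mathrm{Tr}(P_K-P^{j})$ for all $j\in\mathbb{N}_+$.
   Context: Let $A\in\mathbb{R}^{n\times n}$, $B\in\mathbb{R}^{n\times m}$, $C\in\mathbb{R}^{p\times n}$, $D\in\mathbb{R}^{n\times q}$, $E\in\mathbb{R}^{p\times m}$, $\gamma>0$, with $Q:=C^\top C\succ 0$, $E^\top C=0$, $R:=E^\top E\succ 0$. For $K\in\mathbb{R}^{m\times n}$ set $A_K=A-BK$, $Q_K=Q+K^\top RK$, $T_{zw}(K)(s)=(C-EK)(sI-A+BK)^{-1}D$, and $\mathcal{K}=\{K:\ A_K\text{ Hurwitz},\ \|T_{zw}(K)\|_{\mathcal{H}_\infty}<\gamma\}$, where $\|G\|_{\mathcal{H}_\infty}=\sup_{\omega\in\mathbb{R}}\bar\sigma(G(j\omega))$. For $K\in\mathcal{K}$, $P_K$ denotes the unique symmetric positive definite solution of $A_K^\top P+PA_K+Q_K+\gamma^{-2}PDD^\top P=0$ for which $A_K+\gamma^{-2}DD^\top P_K$ is Hurwitz. $\mathrm{Tr}$ is the trace. 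*)

theory Defs
  imports "HOL-Analysis.Analysis"
begin

text \<open>Real matrices are typed as real^'c^'r (r rows, c columns); dimensions are finite index types.\<close>

definition cmat :: "real^'c^'r \<Rightarrow> complex^'c^'r" where
  "cmat M = (\<chi> i j. complex_of_real (M $ i $ j))"

definition hurwitz :: "real^'n^'n \<Rightarrow> bool" where
  "hurwitz M \<longleftrightarrow> (\<forall>(lam::complex) (v::complex^'n). v \<noteq> 0 \<and> cmat M *v v = lam *s v \<longrightarrow> Re lam < 0)"

definition pos_def :: "real^'n^'n \<Rightarrow> bool" where
  "pos_def M \<longleftrightarrow> (\<forall>x. x \<noteq> 0 \<longrightarrow> x \<bullet> (M *v x) > 0)"

text \<open>Largest singular value = induced Euclidean operator norm.\<close>
definition max_sv :: "complex^'c^'r \<Rightarrow> real" where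
  "max_sv G = onorm (\<lambda>v. G *v v)"

definition Hinf_norm :: "(real \<Rightarrow> complex^'c^'r) \<Rightarrow> real" where
  "Hinf_norm G = (SUP w. max_sv (G w))"

definition Tzw :: "real^'n^'n \<Rightarrow> real^'m^'n \<Rightarrow> real^'n^'p \<Rightarrow> real^'q^'n \<Rightarrow> real^'m^'p
      \<Rightarrow> real^'n^'m \<Rightarrow> real \<Rightarrow> complex^'q^'p" where
  "Tzw A B C D E K w = cmat (C - E ** K) **
      matrix_inv (mat (\<i> * complex_of_real w) - cmat (A - B ** K)) ** cmat D"

definition Kset :: "real^'n^'n \<Rightarrow> real^'m^'n \<Rightarrow> real^'n^'p \<Rightarrow> real^'q^'n \<Rightarrow> real^'m^'p
      \<Rightarrow> real \<Rightarrow> (real^'n^'m) set" where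
  "Kset A B C D E \<gamma> = {K. hurwitz (A - B ** K) \<and> Hinf_norm (Tzw A B C D E K) < \<gamma>}"

end

(*
  Write X_j = P_K - P^j and L_K = gamma^-2 D^T P_K. Subtracting the equation for P^j from the
  Riccati equation gives the Lyapunov equation
    (A_K + D L_j)^T X_j + X_j (A_K + D L_j) = -gamma^2 (L_j - L_K)^T (L_j - L_K),
  so X_j is positive semidefinite as long as A_K + D L_j is Hurwitz. Rewriting this equation for
  the feedback L_{j+1} = gamma^-2 D^T P^j splits the right-hand side into two squares; this keeps
  A_K + D L_{j+1} Hurwitz and shows X_j - X_{j+1} >= 0. Rewriting it instead for the optimal feedback
  L_K bounds tr X_{j+1} by a multiple of |L_{j+1} - L_{j+2}|^2, and since
  gamma^2 (L_{j+1} - L_{j+2}) = D^T (X_{j+1} - X_j) this is at most kappa tr (X_j - X_{j+1});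
  then beta = kappa / (1 + kappa).

  For a Hurwitz matrix M, the Lyapunov equation M^T X + X M = -W has a unique solution because M^T and
  -M have disjoint spectra (Sylvester), and X is positive definite when W is: deform M into -I,
  where X = W/2, and note that the smallest eigenvalue of X cannot cross 0 along the way. The
  semidefinite case follows by perturbing W by a small multiple of I.
*)

theory Submission
  imports Defs "HOL-Computational_Algebra.Fundamental_Theorem_Algebra"
begin

lemma matrix_add_rdistrib: "(B + C) ** A = B ** A + C ** A"
  by (simp add: matrix_matrix_mult_def vec_eq_iff distrib_right sum.distrib)

lemma matrix_diff_rdistrib: "(B - C) ** (A::'a::ring_1^_^_) = B ** A - C ** A"
  by (simp add: matrix_matrix_mult_def vec_eq_iff left_diff_distrib sum_subtractf)

lemma matrix_diff_ldistrib: "(A::'a::ring_1^_^_) ** (B - C) = A ** B - A ** C"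
  by (simp add: matrix_matrix_mult_def vec_eq_iff right_diff_distrib sum_subtractf)

lemma matrix_neg_left: "(- B) ** (A::'a::ring_1^_^_) = - (B ** A)"
  by (simp add: matrix_matrix_mult_def vec_eq_iff sum_negf)

lemma matrix_neg_right: "(A::'a::ring_1^_^_) ** (- B) = - (A ** B)"
  by (simp add: matrix_matrix_mult_def vec_eq_iff sum_negf)

lemma matrix_vector_mult_neg: "(- A) *v x = - (A *v (x::'a::ring_1^_))"
  by (simp add: vec_eq_iff matrix_vector_mult_def sum_negf)

lemma transpose_add: "transpose (A + B) = transpose A + transpose B"
  by (simp add: transpose_def vec_eq_iff)

lemma transpose_diff: "transpose (A - B) = transpose A - transpose (B::'a::ab_group_add^'n^'m)"
  by (simp add: transpose_def vec_eq_iff)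

lemma transpose_neg: "transpose (- A) = - transpose (A::'a::ab_group_add^'n^'m)"
  by (simp add: transpose_def vec_eq_iff)

lemma invertible_transpose: "invertible A \<Longrightarrow> invertible (transpose (A::'a::comm_semiring_1^'n^'n))"
  unfolding invertible_def by (metis matrix_transpose_mul transpose_mat)

lemma invertible_uminus: "invertible A \<Longrightarrow> invertible (- (A::'a::comm_ring_1^'n^'n))"
  unfolding invertible_def by (metis matrix_neg_left matrix_neg_right minus_minus)

lemma mat_add: "mat (a + b) = (mat a + mat b :: 'a::monoid_add^'n^'n)"
  by (simp add: mat_def vec_eq_iff)

lemma mat_diff: "mat (a - b) = (mat a - mat b :: 'a::group_add^'n^'n)"
  by (simp add: mat_def vec_eq_iff)

lemma mat_neg: "mat (- a) = (- mat a :: 'a::group_add^'n^'n)"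
  by (simp add: mat_def vec_eq_iff)

lemma mat_mul_left_nth: "(mat c ** (A::'a::semiring_1^'m^'n)) $ i $ j = c * A $ i $ j"
  unfolding matrix_matrix_mult_def mat_def by (simp add: if_distrib if_distribR cong: if_cong)

lemma mat_mul_right_nth: "((A::'a::semiring_1^'m^'n) ** mat c) $ i $ j = A $ i $ j * c"
  unfolding matrix_matrix_mult_def mat_def by (simp add: if_distrib cong: if_cong)

lemma mat_mult: "mat (a * b) = (mat a ** mat b :: 'a::semiring_1^'n^'n)"
  by (simp add: vec_eq_iff mat_mul_left_nth) (simp add: mat_def)

lemma mat_commute: "mat (c::'a::comm_semiring_1) ** (A::'a^'n^'n) = A ** mat c"
  by (simp add: vec_eq_iff mat_mul_left_nth mat_mul_right_nth mult.commute)

lemma mat_mul_left_commute: "mat (c::'a::comm_semiring_1) ** ((N::'a^'n^'n) ** X) = N ** (mat c ** X)"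
  by (simp add: matrix_mul_assoc mat_commute)

lemma mat_mulv: "mat a *v x = a *s (x::'a::comm_semiring_1^'n)"
  by (simp add: vec_eq_iff matrix_vector_mult_def mat_def if_distrib if_distribR cong: if_cong)

lemma mat_of_real_mul: "mat (complex_of_real r) ** X = r *\<^sub>R (X::complex^'n^'n)"
proof -
  have "(r *\<^sub>R X) $ i $ j = complex_of_real r * X $ i $ j" for i j
    by (metis vector_scaleR_component scaleR_conv_of_real)
  then show ?thesis by (simp add: vec_eq_iff mat_mul_left_nth)
qed

section \<open>Polynomials of a complex matrix and the Sylvester equation\<close>

definition poly_matrix :: "complex poly \<Rightarrow> complex^'n^'n \<Rightarrow> complex^'n^'n" where
  "poly_matrix p N = foldr (\<lambda>c M. mat c + N ** M) (coeffs p) 0"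

lemma poly_matrix_0 [simp]: "poly_matrix 0 N = 0"
  by (simp add: poly_matrix_def)

lemma poly_matrix_pCons [simp]: "poly_matrix (pCons a p) N = mat a + N ** poly_matrix p N"
  by (cases "p = 0 \<and> a = 0") (auto simp: poly_matrix_def cCons_def)

lemma poly_matrix_add: "poly_matrix (p + q) N = poly_matrix p N + poly_matrix q N"
  by (induction p q rule: poly_induct2) (simp_all add: mat_add matrix_add_ldistrib)

lemma poly_matrix_smult: "poly_matrix (smult c p) N = mat c ** poly_matrix p N"
  by (induction p) (simp_all add: mat_mult matrix_add_ldistrib mat_mul_left_commute)

lemma poly_matrix_mult: "poly_matrix (p * q) N = poly_matrix p N ** poly_matrix q N"
  by (induction p)
    (simp_all add: poly_matrix_add poly_matrix_smult matrix_add_rdistrib matrix_mul_assoc)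

lemma poly_matrix_diff: "poly_matrix (p - q) N = poly_matrix p N - poly_matrix q N"
  by (induction p q rule: poly_induct2) (simp_all add: mat_diff matrix_diff_ldistrib)

lemma poly_matrix_sum: "finite A \<Longrightarrow> poly_matrix (sum f A) N = (\<Sum>x\<in>A. poly_matrix (f x) N)"
  by (induction A rule: finite_induct) (simp_all add: poly_matrix_add)

lemma poly_matrix_monom: "poly_matrix (monom c k) N = mat c ** (((**) N) ^^ k) (mat 1)"
proof (induction k)
  case 0
  show ?case by (simp add: monom_0)
next
  case (Suc k)
  then show ?case by (simp add: monom_Suc mat_mul_left_commute)
qed

lemma poly_matrix_linear: "poly_matrix [:-a, 1:] N = N - mat a"
  by (simp add: mat_neg)

lemma poly_matrix_annihilating: "\<exists>p. p \<noteq> 0 \<and> poly_matrix p (N::complex^'n^'n) = 0"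
proof -
  define m where "m = DIM(complex^'n^'n)"
  define f where "f k = (((**) N) ^^ k) (mat 1)" for k
  show ?thesis
  proof (cases "inj_on f {..m}")
    case False
    then obtain i j where ij: "i \<noteq> j" "f i = f j"
      unfolding inj_on_def by auto
    define p where "p = monom (1::complex) j - monom 1 i"
    have "coeff p j = 1"
      using ij by (simp add: p_def coeff_monom)
    moreover have "poly_matrix p N = 0"
      using ij(2) by (simp add: p_def poly_matrix_diff poly_matrix_monom f_def)
    ultimately show ?thesis
      by (metis coeff_0 zero_neq_one)
  next
    case True
    have "\<not> card (f ` {..m}) \<le> DIM(complex^'n^'n)"
      using True by (simp add: card_image m_def)
    then have "dependent (f ` {..m})"
      using independent_bound by blast
    then obtain u where u: "\<exists>v\<in>f ` {..m}. u v \<noteq> 0" "(\<Sum>v\<in>f ` {..m}. u v *\<^sub>R v) = 0"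
      using real_vector.dependent_finite[of "f ` {..m}"] by auto
    define p where "p = (\<Sum>k\<le>m. monom (complex_of_real (u (f k))) k)"
    have "poly_matrix p N = (\<Sum>k\<le>m. u (f k) *\<^sub>R f k)"
      by (simp add: p_def poly_matrix_sum poly_matrix_monom mat_of_real_mul f_def)
    also have "\<dots> = 0"
      using u(2) by (simp add: sum.reindex[OF True])
    finally have "poly_matrix p N = 0" .
    moreover obtain k where "k \<le> m" "u (f k) \<noteq> 0"
      using u(1) by auto
    then have "coeff p k \<noteq> 0"
      by (simp add: p_def coeff_sum coeff_monom)
    ultimately show ?thesis
      by (metis coeff_0)
  qed
qed

lemma poly_matrix_annihilating_linear_factors:
  "\<exists>as. poly_matrix (\<Prod>b\<leftarrow>as. [:-b, 1:]) (N::complex^'n^'n) = 0"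
proof -
  obtain p where p: "p \<noteq> 0" "poly_matrix p N = 0"
    using poly_matrix_annihilating by blast
  obtain as where "mset as = proots p"
    using ex_mset by blast
  then have "(\<Prod>a\<in>#proots p. [:-a, 1:]) = (\<Prod>b\<leftarrow>as. [:-b, 1:])"
    by (auto simp flip: prod_mset_prod_list)
  then have "p = smult (lead_coeff p) (\<Prod>b\<leftarrow>as. [:-b, 1:])"
    using complex_poly_decompose_multiset[of p] by simp
  then have "mat (lead_coeff p) ** poly_matrix (\<Prod>b\<leftarrow>as. [:-b, 1:]) N = 0"
    using p(2) by (metis poly_matrix_smult)
  then have "mat (inverse (lead_coeff p) * lead_coeff p) ** poly_matrix (\<Prod>b\<leftarrow>as. [:-b, 1:]) N = 0"
    by (simp add: mat_mult flip: matrix_mul_assoc)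
  then show ?thesis
    using p(1) by auto
qed

text \<open>Peel off the linear factors \<open>N - a\<close> of an annihilating polynomial of \<open>N\<close> one at a time: either
  \<open>N - a\<close> or \<open>S - a\<close> is invertible, and \<open>(N - a) Y = Y (S - a)\<close>.\<close>
lemma sylvester_eq_zero:
  fixes N S Y :: "complex^'n^'n"
  assumes NY: "N ** Y = Y ** S"
    and spectra: "\<And>a. \<not> invertible (N - mat a) \<Longrightarrow> invertible (S - mat a)"
  shows "Y = 0"
proof -
  obtain as where annihilates: "poly_matrix (\<Prod>b\<leftarrow>as. [:-b, 1:]) N = 0"
    using poly_matrix_annihilating_linear_factors by blast
  have "N ** Y = Y ** S \<Longrightarrow> poly_matrix (\<Prod>b\<leftarrow>cs. [:-b, 1:]) N ** Y = 0 \<Longrightarrow> Y = 0" for cs Y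
  proof (induction cs arbitrary: Y)
    case Nil
    then show ?case by (simp add: one_pCons)
  next
    case (Cons a cs)
    have shift: "(N - mat a) ** Y = Y ** (S - mat a)"
      by (simp add: matrix_diff_ldistrib matrix_diff_rdistrib Cons.prems(1) mat_commute)
    have "N ** (N - mat a) = (N - mat a) ** N"
      by (simp add: matrix_diff_ldistrib matrix_diff_rdistrib mat_commute)
    then have "N ** ((N - mat a) ** Y) = (N - mat a) ** (N ** Y)"
      by (simp only: matrix_mul_assoc)
    also have "\<dots> = ((N - mat a) ** Y) ** S"
      by (simp add: Cons.prems(1) matrix_mul_assoc)
    moreover have "poly_matrix (\<Prod>b\<leftarrow>a # cs. [:-b, 1:]) N
        = poly_matrix (\<Prod>b\<leftarrow>cs. [:-b, 1:]) N ** (N - mat a)"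
      by (simp only: list.map prod_list.Cons mult.commute[of "[:-a, 1:]"] poly_matrix_mult poly_matrix_linear)
    then have "poly_matrix (\<Prod>b\<leftarrow>cs. [:-b, 1:]) N ** ((N - mat a) ** Y) = 0"
      using Cons.prems(2) by (simp add: matrix_mul_assoc)
    ultimately have Y': "Y ** (S - mat a) = 0"
      using Cons.IH shift by metis
    show "Y = 0"
    proof (cases "invertible (N - mat a)")
      case True
      then obtain B where "B ** (N - mat a) = mat 1"
        by (auto simp: invertible_left_inverse)
      then have "Y = B ** ((N - mat a) ** Y)"
        by (simp add: matrix_mul_assoc)
      then show ?thesis
        using Y' shift by simp
    next
      case False
      then obtain C where "(S - mat a) ** C = mat 1"
        using spectra by (auto simp: invertible_right_inverse)
      then have "Y = (Y ** (S - mat a)) ** C"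
        by (simp flip: matrix_mul_assoc)
      then show ?thesis
        using Y' by simp
    qed
  qed
  moreover have "poly_matrix (\<Prod>b\<leftarrow>as. [:-b, 1:]) N ** Y = 0"
    by (simp only: annihilates times0_left)
  ultimately show ?thesis
    using NY by blast
qed

section \<open>Hurwitz matrices and the Lyapunov operator\<close>

lemma cmat_nth [simp]: "cmat M $ i $ j = complex_of_real (M $ i $ j)"
  by (simp add: cmat_def)

lemma cmat_mult: "cmat (A ** B) = cmat A ** cmat B"
  by (simp add: vec_eq_iff matrix_matrix_mult_def)

lemma cmat_neg: "cmat (- A) = - cmat A"
  by (simp add: vec_eq_iff)

lemma cmat_transpose: "cmat (transpose A) = transpose (cmat A)"
  by (simp add: vec_eq_iff transpose_def)

lemma cmat_eq_0_iff: "cmat A = 0 \<longleftrightarrow> A = 0"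
  by (simp add: vec_eq_iff)

lemma hurwitz_singular_Re_neg:
  assumes "hurwitz M" "\<not> invertible (cmat M - mat a)"
  shows "Re a < 0"
proof -
  obtain x where x: "x \<noteq> 0" "(cmat M - mat a) *v x = 0"
    using assms(2) by (auto simp: invertible_left_inverse matrix_left_invertible_ker)
  then have "cmat M *v x = a *s x"
    by (simp add: matrix_vector_mult_diff_rdistrib mat_mulv)
  then show ?thesis
    using assms(1) x(1) unfolding hurwitz_def by blast
qed

definition cvec :: "real^'n \<Rightarrow> real^'n \<Rightarrow> complex^'n" where
  "cvec a b = (\<chi> i. Complex (a $ i) (b $ i))"

lemma cmat_mulv_cvec: "cmat M *v cvec a b = cvec (M *v a) (M *v b)"
  by (simp add: vec_eq_iff cvec_def matrix_vector_mult_def complex_eq_iff Re_sum Im_sum)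

lemma Complex_smult_cvec: "Complex \<alpha> \<beta> *s cvec a b = cvec (\<alpha> *\<^sub>R a - \<beta> *\<^sub>R b) (\<beta> *\<^sub>R a + \<alpha> *\<^sub>R b)"
  by (simp add: vec_eq_iff cvec_def complex_eq_iff)

lemma cvec_eq_iff: "cvec a b = cvec c d \<longleftrightarrow> a = c \<and> b = d"
  by (auto simp: vec_eq_iff cvec_def)

lemma cvec_eq_0_iff: "cvec a b = 0 \<longleftrightarrow> a = 0 \<and> b = 0"
  by (auto simp: vec_eq_iff cvec_def complex_eq_iff)

lemma cvec_Re_Im: "cvec (\<chi> i. Re (v $ i)) (\<chi> i. Im (v $ i)) = v"
  by (simp add: vec_eq_iff cvec_def complex_eq_iff)

text \<open>A complex eigenpair \<open>(\<alpha> + i\<beta>, a + ib)\<close> of a real matrix, written out in real and imaginary parts.\<close>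
lemma hurwitz_iff_real:
  fixes M :: "real^'n^'n"
  shows "hurwitz M \<longleftrightarrow> (\<forall>a b \<alpha> \<beta>. (a \<noteq> 0 \<or> b \<noteq> 0) \<and> M *v a = \<alpha> *\<^sub>R a - \<beta> *\<^sub>R b
      \<and> M *v b = \<beta> *\<^sub>R a + \<alpha> *\<^sub>R b \<longrightarrow> \<alpha> < 0)"
  (is "_ \<longleftrightarrow> ?real")
proof
  assume H: "hurwitz M"
  show ?real
  proof (intro allI impI)
    fix a b \<alpha> \<beta>
    assume h: "(a \<noteq> 0 \<or> b \<noteq> 0) \<and> M *v a = \<alpha> *\<^sub>R a - \<beta> *\<^sub>R b \<and> M *v b = \<beta> *\<^sub>R a + \<alpha> *\<^sub>R b"
    then have "cmat M *v cvec a b = Complex \<alpha> \<beta> *s cvec a b"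
      by (simp add: cmat_mulv_cvec Complex_smult_cvec)
    moreover have "cvec a b \<noteq> 0"
      using h by (simp add: cvec_eq_0_iff)
    ultimately show "\<alpha> < 0"
      using H unfolding hurwitz_def by fastforce
  qed
next
  assume R: ?real
  show "hurwitz M"
    unfolding hurwitz_def
  proof (intro allI impI)
    fix \<mu> :: complex and v :: "complex^'n"
    assume h: "v \<noteq> 0 \<and> cmat M *v v = \<mu> *s v"
    define a where "a = (\<chi> i. Re (v $ i))"
    define b where "b = (\<chi> i. Im (v $ i))"
    have v: "v = cvec a b"
      by (simp add: a_def b_def cvec_Re_Im)
    have "cmat M *v cvec a b = Complex (Re \<mu>) (Im \<mu>) *s cvec a b"
      using h v by simp
    then have "cvec (M *v a) (M *v b) = cvec (Re \<mu> *\<^sub>R a - Im \<mu> *\<^sub>R b) (Im \<mu> *\<^sub>R a + Re \<mu> *\<^sub>R b)"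
      by (simp only: cmat_mulv_cvec Complex_smult_cvec)
    then have "M *v a = Re \<mu> *\<^sub>R a - Im \<mu> *\<^sub>R b" "M *v b = Im \<mu> *\<^sub>R a + Re \<mu> *\<^sub>R b"
      by (simp_all add: cvec_eq_iff)
    moreover have "a \<noteq> 0 \<or> b \<noteq> 0"
      using h v cvec_eq_0_iff by auto
    ultimately show "Re \<mu> < 0"
      using R by blast
  qed
qed

definition lyap :: "real^'n^'n \<Rightarrow> real^'n^'n \<Rightarrow> real^'n^'n" where
  "lyap M X = transpose M ** X + X ** M"

lemma linear_lyap: "linear (lyap M)"
  by (rule linearI)
    (simp_all add: lyap_def matrix_add_ldistrib matrix_add_rdistrib matrix_scalar_ac scaleR_add_right
      flip: scalar_matrix_assoc)

lemma lyap_diff: "lyap M (X - Y) = lyap M X - lyap M Y"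
  by (rule linear_diff[OF linear_lyap])

text \<open>The spectra of \<open>M\<^sup>T\<close> and \<open>-M\<close> lie in opposite open half planes.\<close>
lemma lyap_eq_0_imp:
  assumes H: "hurwitz M" and eq: "lyap M X = 0"
  shows "X = 0"
proof -
  have "transpose M ** X = X ** (- M)"
    using eq by (simp add: lyap_def matrix_neg_right eq_neg_iff_add_eq_0)
  then have "cmat (transpose M) ** cmat X = cmat X ** cmat (- M)"
    by (metis cmat_mult)
  then have "cmat X = 0"
  proof (rule sylvester_eq_zero)
    fix a
    assume "\<not> invertible (cmat (transpose M) - mat a)"
    moreover have "cmat (transpose M) - mat a = transpose (cmat M - mat a)"
      by (simp add: cmat_transpose transpose_diff)
    ultimately have "Re a < 0"
      using hurwitz_singular_Re_neg[OF H] invertible_transpose by metis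
    then have "invertible (cmat M - mat (- a))"
      using hurwitz_singular_Re_neg[OF H, of "- a"] by fastforce
    moreover have "cmat (- M) - mat a = - (cmat M - mat (- a))"
      by (simp add: cmat_neg mat_neg)
    ultimately show "invertible (cmat (- M) - mat a)"
      using invertible_uminus by metis
  qed
  then show ?thesis
    by (simp add: cmat_eq_0_iff)
qed

lemma inj_lyap: "hurwitz M \<Longrightarrow> inj (lyap M)"
  using lyap_eq_0_imp linear_inj_iff_eq_0[OF linear_lyap] by blast

lemma lyap_solvable:
  assumes "hurwitz M"
  obtains X where "lyap M X = W"
proof -
  have "surj (lyap M)"
    using linear_injective_imp_surjective[OF linear_lyap inj_lyap[OF assms]] by simp
  then show ?thesis
    using that by (metis surjD)
qed

lemma lyap_transpose: "lyap M (transpose X) = transpose (lyap M X)"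
  by (simp only: lyap_def transpose_add matrix_transpose_mul transpose_transpose add.commute)

definition symm :: "real^'n^'n \<Rightarrow> bool" where
  "symm X \<longleftrightarrow> transpose X = X"

lemma symm_lyap_solution:
  assumes "hurwitz M" "symm W" "lyap M X = W"
  shows "symm X"
proof -
  have "lyap M (transpose X) = lyap M X"
    using assms(2,3) by (simp add: lyap_transpose symm_def)
  then show ?thesis
    using inj_lyap[OF assms(1)] by (simp add: inj_eq symm_def)
qed

section \<open>Quadratic forms, Frobenius norm and trace\<close>

definition psd :: "real^'n^'n \<Rightarrow> bool" where
  "psd X \<longleftrightarrow> (\<forall>x. 0 \<le> x \<bullet> (X *v x))"

lemma inner_matrix_vector_transpose: "x \<bullet> (X *v y) = (transpose X *v x) \<bullet> (y::real^'n)"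
  by (simp add: dot_lmul_matrix[symmetric])

lemma symm_inner_commute: "symm X \<Longrightarrow> x \<bullet> (X *v y) = y \<bullet> (X *v (x::real^'n))"
  unfolding symm_def by (metis inner_matrix_vector_transpose inner_commute)

lemma inner_lyap_self:
  assumes "symm X"
  shows "x \<bullet> (lyap M X *v x) = 2 * ((M *v x) \<bullet> (X *v (x::real^'n)))"
proof -
  have "x \<bullet> (lyap M X *v x) = x \<bullet> (transpose M *v (X *v x)) + x \<bullet> (X *v (M *v x))"
    by (simp add: lyap_def matrix_vector_mult_add_rdistrib inner_add_right flip: matrix_vector_mul_assoc)
  also have "x \<bullet> (transpose M *v (X *v x)) = (M *v x) \<bullet> (X *v x)"
    using inner_matrix_vector_transpose[of x "transpose M" "X *v x"] by simp
  also have "x \<bullet> (X *v (M *v x)) = (M *v x) \<bullet> (X *v x)"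
    using symm_inner_commute[OF assms] by simp
  finally show ?thesis
    by simp
qed

lemma quadratic_nonneg_discriminant:
  fixes a b c :: real
  assumes nonneg: "\<And>t. 0 \<le> a + 2 * t * b + t^2 * c" and "0 \<le> c"
  shows "b^2 \<le> a * c"
proof (cases "c = 0")
  case True
  have "b = 0"
  proof (rule ccontr)
    assume "b \<noteq> 0"
    then have "a + 2 * (- (\<bar>a\<bar> + 1) / (2 * b)) * b = a - (\<bar>a\<bar> + 1)"
      by (simp add: field_simps)
    then show False
      using nonneg[of "- (\<bar>a\<bar> + 1) / (2 * b)"] True by simp
  qed
  then show ?thesis
    using True by simp
next
  case False
  then have c: "c > 0"
    using assms(2) by simp
  have "0 \<le> a + 2 * (- b / c) * b + (- b / c)^2 * c"
    by (rule nonneg)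
  also have "\<dots> = a - b^2 / c"
    using c by (simp add: field_simps power2_eq_square)
  finally show ?thesis
    using c by (simp add: field_simps)
qed

lemma psd_cauchy_schwarz:
  assumes "psd X" "symm X"
  shows "(x \<bullet> (X *v y))^2 \<le> (x \<bullet> (X *v x)) * (y \<bullet> (X *v (y::real^'n)))"
proof (rule quadratic_nonneg_discriminant)
  fix t
  have "0 \<le> (x + t *\<^sub>R y) \<bullet> (X *v (x + t *\<^sub>R y))"
    using assms(1) by (simp add: psd_def)
  also have "\<dots> = x \<bullet> (X *v x) + 2 * t * (x \<bullet> (X *v y)) + t^2 * (y \<bullet> (X *v y))"
    using symm_inner_commute[OF assms(2), of y x]
    by (simp add: matrix_vector_right_distrib matrix_vector_mult_scaleR inner_add_left inner_add_right
        power2_eq_square algebra_simps)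
  finally show "0 \<le> x \<bullet> (X *v x) + 2 * t * (x \<bullet> (X *v y)) + t^2 * (y \<bullet> (X *v y))" .
qed (use assms(1) in \<open>simp add: psd_def\<close>)

lemma psd_quadratic_eq_0_imp:
  assumes "psd X" "symm X" "x \<bullet> (X *v x) = 0"
  shows "X *v x = (0::real^'n)"
proof -
  have "((X *v x) \<bullet> (X *v x))^2 \<le> ((X *v x) \<bullet> (X *v (X *v x))) * (x \<bullet> (X *v x))"
    by (rule psd_cauchy_schwarz[OF assms(1,2)])
  then show ?thesis
    using assms(3) by simp
qed

lemma symm_transpose_mult_self: "symm (transpose A ** A)"
  by (simp add: symm_def matrix_transpose_mul)

lemma inner_transpose_mult_self: "x \<bullet> ((transpose A ** A) *v x) = (A *v x) \<bullet> (A *v (x::real^'n))"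
  using inner_matrix_vector_transpose[of x "transpose A" "A *v x"]
  by (simp flip: matrix_vector_mul_assoc)

lemma psd_transpose_mult_self: "psd (transpose A ** (A::real^'n^'q))"
  by (simp add: psd_def inner_transpose_mult_self)

lemma psd_scaleR: "psd X \<Longrightarrow> 0 \<le> c \<Longrightarrow> psd (c *\<^sub>R X)"
  by (simp add: psd_def flip: scaleR_matrix_vector_assoc)

lemma symm_scaleR: "symm X \<Longrightarrow> symm (c *\<^sub>R X)"
  by (simp add: symm_def transpose_scalar)

lemma symm_diff: "symm X \<Longrightarrow> symm Y \<Longrightarrow> symm (X - Y)"
  by (simp add: symm_def transpose_diff)

lemma power2_norm_vec: "(norm (v::real^'n))^2 = (\<Sum>i\<in>UNIV. (v $ i)^2)"
  unfolding power2_norm_eq_inner inner_vec_def by (simp add: power2_eq_square)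

lemma power2_norm_matrix: "(norm (A::real^'n^'m))^2 = (\<Sum>i\<in>UNIV. (norm (A $ i))^2)"
  by (simp add: power2_norm_eq_inner inner_vec_def)

lemma norm_matrix_vector_le: "norm (A *v x) \<le> norm (A::real^'n^'m) * norm (x::real^'n)"
proof -
  have "(norm (A *v x))^2 = (\<Sum>i\<in>UNIV. (A $ i \<bullet> x)^2)"
    by (simp only: power2_norm_vec matrix_vector_mul_component)
  also have "\<dots> \<le> (\<Sum>i\<in>UNIV. (A $ i \<bullet> A $ i) * (x \<bullet> x))"
    by (intro sum_mono) (metis Cauchy_Schwarz_ineq)
  also have "\<dots> = (norm A * norm x)^2"
    by (simp add: power2_norm_eq_inner inner_vec_def sum_distrib_right power_mult_distrib)
  finally show ?thesis
    by (rule power2_le_imp_le) simp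
qed

lemma abs_quadratic_le_norm: "\<bar>x \<bullet> (X *v x)\<bar> \<le> norm X * (norm (x::real^'n))^2"
proof -
  have "\<bar>x \<bullet> (X *v x)\<bar> \<le> norm x * norm (X *v x)"
    by (rule Cauchy_Schwarz_ineq2)
  also have "\<dots> \<le> norm x * (norm X * norm x)"
    by (intro mult_left_mono norm_matrix_vector_le) simp
  finally show ?thesis
    by (simp add: power2_eq_square mult_ac)
qed

lemma norm_transpose: "norm (transpose (A::real^'n^'m)) = norm A"
proof -
  have "(norm (transpose A))^2 = (norm A)^2"
    unfolding power2_norm_matrix power2_norm_vec by (simp add: transpose_def) (rule sum.swap)
  then show ?thesis
    by (simp add: power2_eq_iff_nonneg)
qed

lemma norm_matrix_mult_le: "norm ((A::real^'k^'m) ** (B::real^'n^'k)) \<le> norm A * norm B"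
proof -
  have row: "(A ** B) $ i = transpose B *v (A $ i)" for i
    by (auto simp: vec_eq_iff matrix_matrix_mult_def matrix_vector_mult_def transpose_def mult.commute
        intro!: sum.cong)
  have "(norm (A ** B))^2 \<le> (\<Sum>i\<in>UNIV. (norm B * norm (A $ i))^2)"
    unfolding power2_norm_matrix
    by (intro sum_mono power_mono)
      (use norm_matrix_vector_le[of "transpose B"] in \<open>simp_all add: row norm_transpose\<close>)
  also have "\<dots> = (norm A * norm B)^2"
    by (simp add: power_mult_distrib power2_norm_matrix sum_distrib_left mult.commute)
  finally show ?thesis
    by (rule power2_le_imp_le) simp
qed

lemma inner_axis_matrix_vector_axis: "axis i 1 \<bullet> ((Y::real^'n^'n) *v axis j 1) = Y $ i $ j"
  by (simp add: matrix_vector_mult_basis inner_axis' column_def)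

lemma trace_nonneg_psd: "psd Y \<Longrightarrow> 0 \<le> trace (Y::real^'n^'n)"
  unfolding trace_def by (intro sum_nonneg) (metis inner_axis_matrix_vector_axis psd_def)

lemma trace_mono_psd: "psd (Z - X) \<Longrightarrow> trace X \<le> trace (Z::real^'n^'n)"
  using trace_nonneg_psd[of "Z - X"] by (simp add: trace_sub)

lemma trace_le_card_norm: "trace (Y::real^'n^'n) \<le> real CARD('n) * norm Y"
proof -
  have "Y $ i $ i \<le> norm Y" for i
    using component_le_norm_cart Finite_Cartesian_Product.norm_nth_le abs_le_D1 order_trans by metis
  then have "trace Y \<le> (\<Sum>i\<in>(UNIV::'n set). norm Y)"
    unfolding trace_def by (rule sum_mono)
  then show ?thesis
    by simp
qed

text \<open>The Cauchy--Schwarz inequality for the form of \<open>Y\<close> bounds each entry: \<open>Y\<^sub>i\<^sub>j\<^sup>2 \<le> Y\<^sub>i\<^sub>i Y\<^sub>j\<^sub>j\<close>.\<close>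
lemma norm_le_trace_psd:
  assumes "psd Y" "symm Y"
  shows "norm (Y::real^'n^'n) \<le> trace Y"
proof -
  have "(norm Y)^2 = (\<Sum>i\<in>UNIV. \<Sum>j\<in>UNIV. (Y $ i $ j)^2)"
    by (simp add: power2_norm_matrix power2_norm_vec)
  also have "\<dots> \<le> (\<Sum>i\<in>UNIV. \<Sum>j\<in>UNIV. Y $ i $ i * Y $ j $ j)"
  proof (intro sum_mono)
    fix i j
    show "(Y $ i $ j)^2 \<le> Y $ i $ i * Y $ j $ j"
      using psd_cauchy_schwarz[OF assms, of "axis i 1" "axis j 1"]
      by (simp add: inner_axis_matrix_vector_axis)
  qed
  also have "\<dots> = (trace Y)^2"
    by (simp add: trace_def power2_eq_square sum_product)
  finally show ?thesis
    by (rule power2_le_imp_le) (rule trace_nonneg_psd[OF assms(1)])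
qed

section \<open>Definiteness of solutions of the Lyapunov equation\<close>

definition unit_minimizer :: "real^'n^'n \<Rightarrow> real^'n" where
  "unit_minimizer Y = (SOME x. norm x = 1 \<and> (\<forall>y. norm y = 1 \<longrightarrow> x \<bullet> (Y *v x) \<le> y \<bullet> (Y *v y)))"

definition min_unit_quadratic :: "real^'n^'n \<Rightarrow> real" where
  "min_unit_quadratic Y = unit_minimizer Y \<bullet> (Y *v unit_minimizer Y)"

lemma unit_minimizer:
  shows "norm (unit_minimizer Y) = 1"
    and "norm y = 1 \<Longrightarrow> min_unit_quadratic Y \<le> y \<bullet> (Y *v y)"
proof -
  have "continuous_on (sphere 0 1) (\<lambda>x. x \<bullet> (Y *v x))"
    by (intro continuous_on_inner continuous_on_id linear_continuous_on matrix_vector_mul_bounded_linear)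
  then have "\<exists>x\<in>sphere 0 1. \<forall>y\<in>sphere 0 1. x \<bullet> (Y *v x) \<le> y \<bullet> (Y *v y)"
    by (intro continuous_attains_inf compact_sphere) simp_all
  then have "\<exists>x. norm x = 1 \<and> (\<forall>y. norm y = 1 \<longrightarrow> x \<bullet> (Y *v x) \<le> y \<bullet> (Y *v y))"
    by auto
  from someI_ex[OF this] show "norm (unit_minimizer Y) = 1" "norm y = 1 \<Longrightarrow> min_unit_quadratic Y \<le> y \<bullet> (Y *v y)"
    unfolding unit_minimizer_def[symmetric] min_unit_quadratic_def by auto
qed

lemma min_unit_quadratic_le: "min_unit_quadratic Y \<le> min_unit_quadratic Z + norm (Y - Z)"
proof -
  let ?x = "unit_minimizer Z"
  have "min_unit_quadratic Y \<le> ?x \<bullet> (Y *v ?x)"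
    using unit_minimizer by blast
  also have "\<dots> = min_unit_quadratic Z + ?x \<bullet> ((Y - Z) *v ?x)"
    by (simp add: min_unit_quadratic_def matrix_vector_mult_diff_rdistrib inner_diff_right)
  also have "\<dots> \<le> min_unit_quadratic Z + norm (Y - Z)"
    using abs_quadratic_le_norm[of ?x "Y - Z"] unit_minimizer(1)[of Z] by simp
  finally show ?thesis .
qed

lemma continuous_on_min_unit_quadratic: "continuous_on S min_unit_quadratic"
proof (rule lipschitz_on_continuous_on)
  show "1-lipschitz_on S min_unit_quadratic"
  proof (rule lipschitz_onI)
    fix Y Z :: "real^'n^'n"
    show "dist (min_unit_quadratic Y) (min_unit_quadratic Z) \<le> 1 * dist Y Z"
      using min_unit_quadratic_le[of Y Z] min_unit_quadratic_le[of Z Y]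
      by (simp add: dist_real_def dist_norm abs_le_iff norm_minus_commute)
  qed simp
qed

lemma quadratic_eq_norm_unit:
  assumes "x \<noteq> 0"
  obtains u where "norm u = 1" "x \<bullet> (Y *v x) = (norm x)^2 * (u \<bullet> (Y *v (u::real^'n)))"
proof
  define u where "u = (1 / norm x) *\<^sub>R x"
  show "norm u = 1"
    using assms by (simp add: u_def)
  have "x = norm x *\<^sub>R u"
    using assms by (simp add: u_def)
  moreover have "(c *\<^sub>R u) \<bullet> (Y *v (c *\<^sub>R u)) = c^2 * (u \<bullet> (Y *v u))" for c
    by (simp add: matrix_vector_mult_scaleR power2_eq_square)
  ultimately show "x \<bullet> (Y *v x) = (norm x)^2 * (u \<bullet> (Y *v u))"
    by metis
qed

lemma psd_if_min_unit_quadratic_nonneg: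
  fixes Y :: "real^'n^'n"
  assumes "0 \<le> min_unit_quadratic Y"
  shows "psd Y"
  unfolding psd_def
proof
  fix x :: "real^'n"
  show "0 \<le> x \<bullet> (Y *v x)"
  proof (cases "x = 0")
    case False
    then obtain u where "norm u = 1" "x \<bullet> (Y *v x) = (norm x)^2 * (u \<bullet> (Y *v u))"
      by (rule quadratic_eq_norm_unit)
    then show ?thesis
      using assms unit_minimizer(2)[of u Y] by simp
  qed simp
qed

lemma pos_def_if_min_unit_quadratic_pos:
  fixes Y :: "real^'n^'n"
  assumes "0 < min_unit_quadratic Y"
  shows "pos_def Y"
  unfolding pos_def_def
proof (intro allI impI)
  fix x :: "real^'n"
  assume "x \<noteq> 0"
  then obtain u where "norm u = 1" "x \<bullet> (Y *v x) = (norm x)^2 * (u \<bullet> (Y *v u))"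
    by (rule quadratic_eq_norm_unit)
  then show "0 < x \<bullet> (Y *v x)"
    using assms unit_minimizer(2)[of u Y] \<open>x \<noteq> 0\<close> by simp
qed

definition segment_neg_id :: "real^'n^'n \<Rightarrow> real \<Rightarrow> real^'n^'n" where
  "segment_neg_id M s = (1 - s) *\<^sub>R M - s *\<^sub>R mat 1"

lemma hurwitz_segment_neg_id:
  fixes M :: "real^'n^'n"
  assumes H: "hurwitz M" and s: "0 \<le> s" "s \<le> 1"
  shows "hurwitz (segment_neg_id M s)"
  unfolding hurwitz_iff_real
proof (intro allI impI)
  fix a b :: "real^'n" and \<alpha> \<beta>
  assume h: "(a \<noteq> 0 \<or> b \<noteq> 0) \<and> segment_neg_id M s *v a = \<alpha> *\<^sub>R a - \<beta> *\<^sub>R b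
    \<and> segment_neg_id M s *v b = \<beta> *\<^sub>R a + \<alpha> *\<^sub>R b"
  then have ea: "(1 - s) *\<^sub>R (M *v a) = (\<alpha> + s) *\<^sub>R a - \<beta> *\<^sub>R b"
    and eb: "(1 - s) *\<^sub>R (M *v b) = \<beta> *\<^sub>R a + (\<alpha> + s) *\<^sub>R b"
    by (simp_all add: segment_neg_id_def matrix_vector_mult_diff_rdistrib algebra_simps
        flip: scaleR_matrix_vector_assoc)
  show "\<alpha> < 0"
  proof (cases "s = 1")
    case True
    have "a \<bullet> ((\<alpha> + 1) *\<^sub>R a - \<beta> *\<^sub>R b) + b \<bullet> (\<beta> *\<^sub>R a + (\<alpha> + 1) *\<^sub>R b) = 0"
      using ea eb True by simp
    then have "(\<alpha> + 1) * (a \<bullet> a + b \<bullet> b) = 0"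
      by (simp add: inner_diff_right inner_add_right inner_commute algebra_simps)
    moreover have "a \<bullet> a + b \<bullet> b > 0"
      using h by (metis add_nonneg_pos add_pos_nonneg inner_gt_zero_iff inner_ge_zero)
    ultimately show ?thesis
      by simp
  next
    case False
    then have s1: "1 - s > 0"
      using s by simp
    have "M *v a = (1 / (1 - s)) *\<^sub>R ((1 - s) *\<^sub>R (M *v a))"
      using s1 by simp
    also have "\<dots> = ((\<alpha> + s) / (1 - s)) *\<^sub>R a - (\<beta> / (1 - s)) *\<^sub>R b"
      unfolding ea by (simp add: algebra_simps divide_inverse)
    finally have "M *v a = ((\<alpha> + s) / (1 - s)) *\<^sub>R a - (\<beta> / (1 - s)) *\<^sub>R b" .
    moreover have "M *v b = (1 / (1 - s)) *\<^sub>R ((1 - s) *\<^sub>R (M *v b))"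
      using s1 by simp
    then have "M *v b = (\<beta> / (1 - s)) *\<^sub>R a + ((\<alpha> + s) / (1 - s)) *\<^sub>R b"
      unfolding eb by (simp add: algebra_simps divide_inverse)
    ultimately have "(\<alpha> + s) / (1 - s) < 0"
      using H h unfolding hurwitz_iff_real by blast
    then show ?thesis
      using s s1 by (simp add: divide_less_0_iff)
  qed
qed

lemma lyap_segment_neg_id: "lyap (segment_neg_id M s) Y = lyap M Y - s *\<^sub>R (lyap M Y + (Y + Y))"
proof -
  have "transpose (segment_neg_id M s) = (1 - s) *\<^sub>R transpose M - s *\<^sub>R mat 1"
    by (simp add: segment_neg_id_def transpose_diff transpose_scalar)
  then have "lyap (segment_neg_id M s) Y
      = (1 - s) *\<^sub>R (transpose M ** Y) - s *\<^sub>R Y + ((1 - s) *\<^sub>R (Y ** M) - s *\<^sub>R Y)"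
    unfolding lyap_def segment_neg_id_def
    by (simp only: matrix_diff_rdistrib matrix_diff_ldistrib matrix_scalar_ac matrix_mul_lid matrix_mul_rid
        flip: scalar_matrix_assoc)
  then show ?thesis
    by (simp add: lyap_def algebra_simps)
qed

lemma continuous_on_lyap_solution_segment:
  assumes H: "\<And>s. s \<in> {0..1} \<Longrightarrow> hurwitz (segment_neg_id M s)"
    and X: "\<And>s. s \<in> {0..1} \<Longrightarrow> lyap (segment_neg_id M s) (X s) = W"
  shows "continuous_on {0..1} X"
  unfolding continuous_on_iff
proof (intro ballI allI impI)
  fix s0 e :: real
  assume s0: "s0 \<in> {0..1}" and e: "e > 0"
  define G where "G Y = lyap M Y + (Y + Y)" for Y
  have "linear G"
    unfolding G_def by (intro linear_compose_add linear_lyap linear_id[unfolded id_def])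
  then obtain K where K: "K > 0" "\<And>Y. norm (G Y) \<le> K * norm Y"
    using linear_bounded_pos by blast
  have shift: "lyap (segment_neg_id M s0) Y = lyap (segment_neg_id M s) Y + (s - s0) *\<^sub>R G Y" for s Y
    by (simp add: lyap_segment_neg_id G_def algebra_simps)
  obtain c where c: "c > 0" "\<And>Y. c * norm Y \<le> norm (lyap (segment_neg_id M s0) Y)"
    using linear_inj_bounded_below_pos[OF linear_lyap inj_lyap[OF H[OF s0]]] by blast
  define n0 where "n0 = norm (X s0)"
  define d where "d = min (c / (2 * K)) (e * c / (2 * K * (n0 + 1)))"
  have n0: "n0 \<ge> 0"
    by (simp add: n0_def)
  show "\<exists>d>0. \<forall>s\<in>{0..1}. dist s s0 < d \<longrightarrow> dist (X s) (X s0) < e"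
  proof (intro exI[of _ d] conjI ballI impI)
    show "d > 0"
      using c K e n0 by (simp add: d_def)
    fix s
    assume s: "s \<in> {0..1}" "dist s s0 < d"
    define \<Delta> where "\<Delta> = X s - X s0"
    have "lyap (segment_neg_id M s0) \<Delta> = (s - s0) *\<^sub>R G (X s0) + (s - s0) *\<^sub>R G \<Delta>"
      using X[OF s(1)] X[OF s0] shift[where s = s and Y = "X s"]
      by (simp add: \<Delta>_def lyap_diff G_def algebra_simps)
    then have "c * norm \<Delta> \<le> \<bar>s - s0\<bar> * norm (G (X s0)) + \<bar>s - s0\<bar> * norm (G \<Delta>)"
      using c(2)[of \<Delta>] norm_triangle_ineq[of "(s - s0) *\<^sub>R G (X s0)" "(s - s0) *\<^sub>R G \<Delta>"] by simp
    also have "\<dots> \<le> \<bar>s - s0\<bar> * (K * n0) + \<bar>s - s0\<bar> * (K * norm \<Delta>)"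
      unfolding n0_def by (intro add_mono mult_left_mono K(2)) auto
    finally have bound: "c * norm \<Delta> \<le> \<bar>s - s0\<bar> * K * n0 + (\<bar>s - s0\<bar> * K) * norm \<Delta>"
      by (simp add: algebra_simps)
    have "\<bar>s - s0\<bar> * K \<le> c / 2"
      using s(2) K(1) by (simp add: d_def dist_real_def field_simps)
    then have "c / 2 * norm \<Delta> \<le> \<bar>s - s0\<bar> * K * n0"
      using bound mult_right_mono[of "\<bar>s - s0\<bar> * K" "c / 2" "norm \<Delta>"] by simp
    also have "\<dots> \<le> \<bar>s - s0\<bar> * (K * (n0 + 1))"
      using K(1) by (simp add: algebra_simps)
    also have "\<dots> < e * c / 2"
    proof -
      have "\<bar>s - s0\<bar> < e * c / (2 * K * (n0 + 1))"
        using s(2) by (simp add: d_def dist_real_def)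
      moreover have "0 < 2 * K * (n0 + 1)"
        using K(1) n0 by simp
      ultimately have "\<bar>s - s0\<bar> * (2 * K * (n0 + 1)) < e * c"
        by (simp add: pos_less_divide_eq)
      then show ?thesis
        by (simp add: field_simps)
    qed
    finally show "dist (X s) (X s0) < e"
      using c(1) by (simp add: \<Delta>_def dist_norm field_simps)
  qed
qed

text \<open>Deform \<open>M\<close> into \<open>-I\<close>: the solution moves continuously from \<open>X\<close> to \<open>W/2\<close>, and the least value
  of its form on the unit sphere cannot reach \<open>0\<close>, since a unit null vector of a semidefinite
  solution would be a null vector of \<open>W\<close>.\<close>
lemma pos_def_lyap_solution:
  fixes M W X :: "real^'n^'n"
  assumes H: "hurwitz M" and W: "symm W" "pos_def W" and eq: "lyap M X = - W"
  shows "pos_def X"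
proof -
  define Xs where "Xs s = (SOME Y. lyap (segment_neg_id M s) Y = - W)" for s
  have Hs: "hurwitz (segment_neg_id M s)" if "s \<in> {0..1}" for s
    using hurwitz_segment_neg_id[OF H] that by auto
  have Xs: "lyap (segment_neg_id M s) (Xs s) = - W" if "s \<in> {0..1}" for s
    unfolding Xs_def by (rule someI_ex) (meson lyap_solvable[OF Hs[OF that]])
  have symm_Xs: "symm (Xs s)" if "s \<in> {0..1}" for s
    using symm_lyap_solution[OF Hs[OF that] _ Xs[OF that]] W(1) by (simp add: symm_def transpose_neg)
  have "lyap M (Xs 0) = lyap M X"
    using Xs[of 0] eq by (simp add: segment_neg_id_def)
  then have X0: "Xs 0 = X"
    by (rule injD[OF inj_lyap[OF H]])
  have "Xs 1 + Xs 1 = W"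
    using Xs[of 1] by (simp add: lyap_segment_neg_id)
  then have X1: "Xs 1 = (1/2) *\<^sub>R W"
    by (metis scaleR_add_right scaleR_half_double)
  define m where "m s = min_unit_quadratic (Xs s)" for s
  have "continuous_on {0..1} m"
    unfolding m_def
    by (rule continuous_on_compose2[OF continuous_on_min_unit_quadratic
          continuous_on_lyap_solution_segment[OF Hs Xs]]) auto
  moreover have "m 1 > 0"
  proof -
    have "unit_minimizer (Xs 1) \<noteq> 0"
      using unit_minimizer(1)[of "Xs 1"] by auto
    then show ?thesis
      using W(2) by (simp add: m_def min_unit_quadratic_def X1 pos_def_def flip: scaleR_matrix_vector_assoc)
  qed
  moreover have "m s \<noteq> 0" if s: "s \<in> {0..1}" for s
  proof
    assume ms: "m s = 0"
    let ?x = "unit_minimizer (Xs s)"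
    have "psd (Xs s)"
      using ms by (intro psd_if_min_unit_quadratic_nonneg) (simp add: m_def)
    then have "Xs s *v ?x = 0"
      using ms symm_Xs[OF s] by (intro psd_quadratic_eq_0_imp) (simp_all add: m_def min_unit_quadratic_def)
    then have "?x \<bullet> (lyap (segment_neg_id M s) (Xs s) *v ?x) = 0"
      by (simp add: inner_lyap_self[OF symm_Xs[OF s]])
    moreover have "?x \<noteq> 0"
      using unit_minimizer(1)[of "Xs s"] by auto
    ultimately show False
      using W(2) Xs[OF s] by (auto simp: pos_def_def matrix_vector_mult_neg)
  qed
  ultimately have "m 0 > 0"
    using IVT'[of m 0 0 1] by force
  then show ?thesis
    using pos_def_if_min_unit_quadratic_pos X0 by (simp add: m_def)
qed

lemma psd_lyap_solution:
  fixes M W X :: "real^'n^'n"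
  assumes H: "hurwitz M" and W: "symm W" "psd W" and eq: "lyap M X = - W"
  shows "psd X"
  unfolding psd_def
proof
  fix x :: "real^'n"
  obtain Z where Z: "lyap M Z = - mat 1"
    using lyap_solvable[OF H] by blast
  have pd: "pos_def (e *\<^sub>R X + Z)" if "e > 0" for e
  proof (rule pos_def_lyap_solution[OF H])
    show "symm (e *\<^sub>R W + mat 1)"
      using W(1) by (simp add: symm_def transpose_add transpose_scalar)
    show "pos_def (e *\<^sub>R W + mat 1)"
      using W(2) \<open>e > 0\<close>
      by (auto simp: pos_def_def psd_def matrix_vector_mult_add_rdistrib inner_add_right
          intro!: add_nonneg_pos simp flip: scaleR_matrix_vector_assoc)
    show "lyap M (e *\<^sub>R X + Z) = - (e *\<^sub>R W + mat 1)"
      using eq Z by (simp add: linear_add[OF linear_lyap] linear_scale[OF linear_lyap])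
  qed
  show "0 \<le> x \<bullet> (X *v x)"
  proof (rule ccontr)
    assume neg: "\<not> 0 \<le> x \<bullet> (X *v x)"
    define e where "e = (\<bar>x \<bullet> (Z *v x)\<bar> + 1) / - (x \<bullet> (X *v x))"
    have "e > 0"
      unfolding e_def using neg by (intro divide_pos_pos) auto
    have e: "e * (x \<bullet> (X *v x)) = - (\<bar>x \<bullet> (Z *v x)\<bar> + 1)"
      using neg by (simp add: e_def)
    have "x \<noteq> 0"
      using neg by auto
    then have "0 < x \<bullet> ((e *\<^sub>R X + Z) *v x)"
      using pd[OF \<open>e > 0\<close>] by (simp add: pos_def_def)
    also have "\<dots> = e * (x \<bullet> (X *v x)) + x \<bullet> (Z *v x)"
      by (simp add: matrix_vector_mult_add_rdistrib inner_add_right flip: scaleR_matrix_vector_assoc)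
    finally show False
      using e by linarith
  qed
qed

section \<open>Feedback updates of the Lyapunov equation\<close>

lemma lyap_add_feedback:
  fixes N X :: "real^'n^'n" and D :: "real^'q^'n" and H :: "real^'n^'q"
  assumes "symm X"
  shows "lyap (N + D ** H) X = lyap N X + transpose H ** (transpose D ** X) + transpose (transpose D ** X) ** H"
proof -
  have "transpose (D ** H) ** X = transpose H ** (transpose D ** X)"
    by (simp add: matrix_transpose_mul matrix_mul_assoc)
  moreover have "X ** (D ** H) = transpose (transpose D ** X) ** H"
    using assms by (simp add: matrix_transpose_mul matrix_mul_assoc symm_def)
  ultimately show ?thesis
    by (simp add: lyap_def transpose_add matrix_add_rdistrib matrix_add_ldistrib algebra_simps)
qed

lemma transpose_mult_self_diff:
  "transpose (A - B) ** (A - B) = transpose A ** A - transpose A ** B - (transpose B ** A - transpose B ** (B::real^'n^'q))"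
  by (simp only: transpose_diff matrix_diff_rdistrib matrix_diff_ldistrib) (simp add: algebra_simps)

lemma transpose_mult_self_add:
  "transpose (A + B) ** (A + B) = transpose A ** A + transpose A ** B + (transpose B ** A + transpose B ** (B::real^'n^'q))"
  by (simp only: transpose_add matrix_add_rdistrib matrix_add_ldistrib) (simp add: algebra_simps)

lemma lyap_feedback_update:
  fixes N X :: "real^'n^'n" and D :: "real^'q^'n" and L L' LK :: "real^'n^'q"
  assumes "symm X"
    and gain: "transpose D ** X = - (g *\<^sub>R (L' - LK))"
    and eq: "lyap (N + D ** L) X = - (g *\<^sub>R (transpose (L - LK) ** (L - LK)))"
  shows "lyap (N + D ** L') X
    = - (g *\<^sub>R (transpose (L - L') ** (L - L') + transpose (L' - LK) ** (L' - LK)))"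
proof -
  define H where "H = L - L'"
  define F where "F = L' - LK"
  have split: "N + D ** L = (N + D ** L') + D ** H"
    by (simp add: H_def matrix_diff_ldistrib)
  have "lyap (N + D ** L) X = lyap (N + D ** L') X - g *\<^sub>R (transpose H ** F) - g *\<^sub>R (transpose F ** H)"
    unfolding split lyap_add_feedback[OF assms(1)] gain F_def[symmetric]
    by (simp add: transpose_neg transpose_scalar matrix_neg_right matrix_neg_left matrix_scalar_ac
        flip: scalar_matrix_assoc)
  moreover have "L - LK = H + F"
    by (simp add: H_def F_def)
  ultimately have "lyap (N + D ** L') X
      = - (g *\<^sub>R (transpose (H + F) ** (H + F))) + g *\<^sub>R (transpose H ** F) + g *\<^sub>R (transpose F ** H)"
    using eq by (simp add: algebra_simps)
  also have "\<dots> = - (g *\<^sub>R (transpose H ** H + transpose F ** F))"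
    unfolding transpose_mult_self_add by (simp add: algebra_simps)
  finally show ?thesis
    by (simp add: H_def F_def)
qed

lemma lyap_feedback_reference:
  fixes N X :: "real^'n^'n" and D :: "real^'q^'n" and L' LK G :: "real^'n^'q"
  assumes "symm X"
    and gain: "transpose D ** X = - (g *\<^sub>R G)"
    and eq: "lyap (N + D ** L') X = - (g *\<^sub>R (transpose (L' - LK) ** (L' - LK)))"
  shows "lyap (N + D ** LK) X
    = - (g *\<^sub>R (transpose ((L' - LK) - G) ** ((L' - LK) - G))) + g *\<^sub>R (transpose G ** G)"
proof -
  define F where "F = L' - LK"
  have split: "N + D ** L' = (N + D ** LK) + D ** F"
    by (simp add: F_def matrix_diff_ldistrib)
  have "lyap (N + D ** L') X = lyap (N + D ** LK) X - g *\<^sub>R (transpose F ** G) - g *\<^sub>R (transpose G ** F)"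
    unfolding split lyap_add_feedback[OF assms(1)] gain
    by (simp add: transpose_neg transpose_scalar matrix_neg_right matrix_neg_left matrix_scalar_ac
        flip: scalar_matrix_assoc)
  then have "lyap (N + D ** LK) X
      = - (g *\<^sub>R (transpose F ** F)) + g *\<^sub>R (transpose F ** G) + g *\<^sub>R (transpose G ** F)"
    using eq by (simp add: F_def[symmetric] algebra_simps)
  also have "\<dots> = - (g *\<^sub>R (transpose (F - G) ** (F - G))) + g *\<^sub>R (transpose G ** G)"
    unfolding transpose_mult_self_diff by (simp add: algebra_simps)
  finally show ?thesis
    by (simp add: F_def)
qed

text \<open>On an eigenvector \<open>v\<close> of \<open>M\<close> with \<open>Re \<lambda> \<ge> 0\<close> the equation forces \<open>F v = 0\<close>, so \<open>v\<close> would be an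
  eigenvector of the Hurwitz matrix \<open>M - D F\<close> for the same eigenvalue.\<close>
lemma hurwitz_if_lyap_certificate:
  fixes M X V :: "real^'n^'n" and D :: "real^'q^'n" and F :: "real^'n^'q"
  assumes H: "hurwitz (M - D ** F)" and "g > 0" and X: "symm X" "psd X" and "psd V"
    and eq: "lyap M X = - (V + g *\<^sub>R (transpose F ** F))"
  shows "hurwitz M"
  unfolding hurwitz_iff_real
proof (intro allI impI)
  fix a b :: "real^'n" and \<alpha> \<beta> :: real
  assume h: "(a \<noteq> 0 \<or> b \<noteq> 0) \<and> M *v a = \<alpha> *\<^sub>R a - \<beta> *\<^sub>R b \<and> M *v b = \<beta> *\<^sub>R a + \<alpha> *\<^sub>R b"
  show "\<alpha> < 0"
  proof (rule ccontr)
    assume "\<not> \<alpha> < 0"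
    have quad: "x \<bullet> (lyap M X *v x) = - (x \<bullet> (V *v x) + g * ((F *v x) \<bullet> (F *v x)))" for x
      using eq by (simp add: matrix_vector_mult_neg matrix_vector_mult_add_rdistrib
          matrix_vector_mult_diff_rdistrib inner_diff_right inner_transpose_mult_self
          flip: scaleR_matrix_vector_assoc)
    have Ma: "M *v a = \<alpha> *\<^sub>R a - \<beta> *\<^sub>R b" and Mb: "M *v b = \<beta> *\<^sub>R a + \<alpha> *\<^sub>R b"
      using h by simp_all
    have "a \<bullet> (lyap M X *v a) + b \<bullet> (lyap M X *v b) = 2 * ((M *v a) \<bullet> (X *v a) + (M *v b) \<bullet> (X *v b))"
      by (simp add: inner_lyap_self[OF X(1)])
    also have "\<dots> = 2 * \<alpha> * (a \<bullet> (X *v a) + b \<bullet> (X *v b))"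
      using symm_inner_commute[OF X(1), of a b]
      by (simp add: Ma Mb inner_diff_left inner_add_left algebra_simps)
    also have "\<dots> \<ge> 0"
      using \<open>\<not> \<alpha> < 0\<close> X(2) by (simp add: psd_def)
    finally have "0 \<le> - (a \<bullet> (V *v a) + g * ((F *v a) \<bullet> (F *v a))) - (b \<bullet> (V *v b) + g * ((F *v b) \<bullet> (F *v b)))"
      by (simp add: quad)
    moreover have "0 \<le> a \<bullet> (V *v a)" "0 \<le> b \<bullet> (V *v b)"
      using \<open>psd V\<close> by (simp_all add: psd_def)
    moreover have "0 \<le> g * ((F *v a) \<bullet> (F *v a))" "0 \<le> g * ((F *v b) \<bullet> (F *v b))"
      using \<open>g > 0\<close> by simp_all
    ultimately have "g * ((F *v a) \<bullet> (F *v a)) = 0" "g * ((F *v b) \<bullet> (F *v b)) = 0"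
      by linarith+
    then have "F *v a = 0" "F *v b = 0"
      using \<open>g > 0\<close> by simp_all
    then have "(M - D ** F) *v a = \<alpha> *\<^sub>R a - \<beta> *\<^sub>R b" "(M - D ** F) *v b = \<beta> *\<^sub>R a + \<alpha> *\<^sub>R b"
      using h by (simp_all add: matrix_vector_mult_diff_rdistrib flip: matrix_vector_mul_assoc)
    then show False
      using H h \<open>\<not> \<alpha> < 0\<close> unfolding hurwitz_iff_real by blast
  qed
qed

lemma trace_le_if_lyap_dominated:
  fixes M X U V :: "real^'n^'n"
  assumes H: "hurwitz M" and c: "c > 0" "\<And>Y. c * norm Y \<le> norm (lyap M Y)"
    and V: "symm V" "psd V" and eq: "lyap M X = - U + V"
  shows "trace X \<le> real CARD('n) * norm U / c"
proof -
  obtain Z where Z: "lyap M Z = - U"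
    using lyap_solvable[OF H] by blast
  have "lyap M (Z - X) = - V"
    by (simp add: lyap_diff Z eq)
  then have "trace X \<le> trace Z"
    using psd_lyap_solution[OF H V] trace_mono_psd by blast
  also have "\<dots> \<le> real CARD('n) * norm Z"
    by (rule trace_le_card_norm)
  also have "\<dots> \<le> real CARD('n) * norm U / c"
    using c(2)[of Z] c(1) by (simp add: Z field_simps)
  finally show ?thesis .
qed

section \<open>The policy iteration for the disturbance gain\<close>

locale disturbance_iteration =
  fixes AK PK Q :: "real^'n^'n" and D :: "real^'q^'n" and LK :: "real^'n^'q" and g :: real
    and L :: "nat \<Rightarrow> real^'n^'q" and P :: "nat \<Rightarrow> real^'n^'n"
  assumes g_pos: "g > 0"
    and symm_PK: "symm PK"
    and LK_eq: "LK = inverse g *\<^sub>R (transpose D ** PK)"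
    and riccati_PK: "lyap AK PK + Q + g *\<^sub>R (transpose LK ** LK) = 0"
    and hurwitz_LK: "hurwitz (AK + D ** LK)"
    and hurwitz_L0: "hurwitz (AK + D ** L 0)"
    and lyap_P: "\<And>j. lyap (AK + D ** L j) (P j) + Q - g *\<^sub>R (transpose (L j) ** L j) = 0"
    and L_Suc: "\<And>j. L (Suc j) = inverse g *\<^sub>R (transpose D ** P j)"
begin

definition err :: "nat \<Rightarrow> real^'n^'n" where
  "err j = PK - P j"

lemma lyap_err: "lyap (AK + D ** L j) (err j) = - (g *\<^sub>R (transpose (L j - LK) ** (L j - LK)))"
proof -
  have gain: "transpose D ** PK = g *\<^sub>R LK"
    using g_pos by (simp add: LK_eq)
  have PK: "lyap (AK + D ** L j) PK
      = lyap AK PK + g *\<^sub>R (transpose (L j) ** LK) + g *\<^sub>R (transpose LK ** L j)"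
    using lyap_add_feedback[OF symm_PK, of AK D "L j"]
    by (simp add: gain transpose_scalar matrix_scalar_ac flip: scalar_matrix_assoc)
  have P: "lyap (AK + D ** L j) (P j) = g *\<^sub>R (transpose (L j) ** L j) - Q"
    using lyap_P[of j] by (simp add: algebra_simps eq_diff_eq)
  have AK: "lyap AK PK = - Q - g *\<^sub>R (transpose LK ** LK)"
    using riccati_PK by (simp add: algebra_simps eq_neg_iff_add_eq_0)
  have "lyap (AK + D ** L j) (err j)
      = - (g *\<^sub>R (transpose (L j) ** L j - transpose (L j) ** LK - (transpose LK ** L j - transpose LK ** LK)))"
    unfolding err_def lyap_diff PK P AK by (simp add: algebra_simps)
  then show ?thesis
    by (simp only: transpose_mult_self_diff)
qed

lemma gain_err: "transpose D ** err j = - (g *\<^sub>R (L (Suc j) - LK))"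
  using g_pos by (simp add: err_def L_Suc LK_eq matrix_diff_ldistrib scaleR_diff_right)

lemma symm_psd_err_if_hurwitz:
  assumes "hurwitz (AK + D ** L j)"
  shows "symm (err j)" "psd (err j)"
proof -
  have "symm (g *\<^sub>R (transpose (L j - LK) ** (L j - LK)))"
    by (intro symm_scaleR symm_transpose_mult_self)
  moreover have "psd (g *\<^sub>R (transpose (L j - LK) ** (L j - LK)))"
    using g_pos by (intro psd_scaleR psd_transpose_mult_self) auto
  ultimately show "symm (err j)" "psd (err j)"
    using symm_lyap_solution[OF assms _ lyap_err] psd_lyap_solution[OF assms _ _ lyap_err]
    by (auto simp: symm_def transpose_neg)
qed

lemma hurwitz_L: "hurwitz (AK + D ** L j)"
proof (induction j)
  case 0
  show ?case
    by (rule hurwitz_L0)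
next
  case (Suc j)
  have shift: "AK + D ** L (Suc j) - D ** (L (Suc j) - LK) = AK + D ** LK"
    by (simp add: matrix_diff_ldistrib)
  have H: "hurwitz (AK + D ** L (Suc j) - D ** (L (Suc j) - LK))"
    using hurwitz_LK by (simp only: shift)
  have eq: "lyap (AK + D ** L (Suc j)) (err j) = - (g *\<^sub>R (transpose (L j - L (Suc j)) ** (L j - L (Suc j)))
      + g *\<^sub>R (transpose (L (Suc j) - LK) ** (L (Suc j) - LK)))"
    using lyap_feedback_update[OF symm_psd_err_if_hurwitz(1)[OF Suc.IH] gain_err lyap_err]
    by (simp add: scaleR_add_right)
  have V: "psd (g *\<^sub>R (transpose (L j - L (Suc j)) ** (L j - L (Suc j))))"
    using g_pos by (intro psd_scaleR psd_transpose_mult_self) simp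
  show ?case
    by (rule hurwitz_if_lyap_certificate[OF H g_pos symm_psd_err_if_hurwitz[OF Suc.IH] V eq])
qed

lemma symm_err: "symm (err j)" and psd_err: "psd (err j)"
  using symm_psd_err_if_hurwitz[OF hurwitz_L] by auto

lemma psd_err_diff: "psd (err j - err (Suc j))"
proof -
  have "lyap (AK + D ** L (Suc j)) (err j - err (Suc j))
      = - (g *\<^sub>R (transpose (L j - L (Suc j)) ** (L j - L (Suc j))))"
    unfolding lyap_diff lyap_feedback_update[OF symm_err gain_err lyap_err] lyap_err[of "Suc j"]
    by (simp add: scaleR_add_right)
  moreover have "symm (g *\<^sub>R (transpose (L j - L (Suc j)) ** (L j - L (Suc j))))"
    by (intro symm_scaleR symm_transpose_mult_self)
  moreover have "psd (g *\<^sub>R (transpose (L j - L (Suc j)) ** (L j - L (Suc j))))"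
    using g_pos by (intro psd_scaleR psd_transpose_mult_self) simp
  ultimately show ?thesis
    using psd_lyap_solution[OF hurwitz_L] by blast
qed

lemma trace_err_le_trace_err_0: "trace (err j) \<le> trace (err 0)"
proof (induction j)
  case (Suc j)
  then show ?case
    using trace_mono_psd[OF psd_err_diff, of j] by linarith
qed simp

lemma norm_gain_step_le:
  "g * norm (L (Suc j) - L (Suc (Suc j))) \<le> norm (transpose D) * (trace (err j) - trace (err (Suc j)))"
proof -
  have "transpose D ** (err j - err (Suc j)) = - (g *\<^sub>R (L (Suc j) - LK)) + g *\<^sub>R (L (Suc (Suc j)) - LK)"
    by (simp add: matrix_diff_ldistrib gain_err)
  also have "\<dots> = - (g *\<^sub>R (L (Suc j) - L (Suc (Suc j))))"
    by (simp add: scaleR_diff_right)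
  finally have "g * norm (L (Suc j) - L (Suc (Suc j))) = norm (transpose D ** (err j - err (Suc j)))"
    using g_pos by simp
  also have "\<dots> \<le> norm (transpose D) * norm (err j - err (Suc j))"
    by (rule norm_matrix_mult_le)
  also have "\<dots> \<le> norm (transpose D) * trace (err j - err (Suc j))"
    using norm_le_trace_psd[OF psd_err_diff symm_diff[OF symm_err symm_err]] by (simp add: mult_left_mono)
  finally show ?thesis
    by (simp add: trace_sub)
qed

text \<open>Comparing with the Lyapunov equation of the optimal closed loop \<open>A\<^sub>K + D L\<^sub>K\<close> bounds the error by
  the square of the gain step, and the gain step by the decrease of the error.\<close>
lemma trace_err_Suc_le:
  assumes c: "c > 0" "\<And>Y. c * norm Y \<le> norm (lyap (AK + D ** LK) Y)"
  shows "trace (err (Suc j)) \<le> real CARD('n) * (norm (transpose D))^2 * trace (err 0) / (g * c)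
           * (trace (err j) - trace (err (Suc j)))"
proof -
  define F where "F = L (Suc j) - L (Suc (Suc j))"
  define G where "G = L (Suc (Suc j)) - LK"
  define \<delta> where "\<delta> = trace (err j) - trace (err (Suc j))"
  have "lyap (AK + D ** LK) (err (Suc j)) = - (g *\<^sub>R (transpose F ** F)) + g *\<^sub>R (transpose G ** G)"
    using lyap_feedback_reference[OF symm_err gain_err lyap_err, of "Suc j"] by (simp add: F_def G_def)
  moreover have "symm (g *\<^sub>R (transpose G ** G))" "psd (g *\<^sub>R (transpose G ** G))"
    using g_pos by (auto intro: symm_scaleR symm_transpose_mult_self psd_scaleR psd_transpose_mult_self)
  ultimately have "trace (err (Suc j)) \<le> real CARD('n) * norm (g *\<^sub>R (transpose F ** F)) / c"
    using trace_le_if_lyap_dominated[OF hurwitz_LK c] by blast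
  moreover have "g * norm (g *\<^sub>R (transpose F ** F)) \<le> (norm (transpose D))^2 * trace (err 0) * \<delta>"
  proof -
    have "g * norm (g *\<^sub>R (transpose F ** F)) \<le> (g * norm F)^2"
      using g_pos norm_matrix_mult_le[of "transpose F" F]
      by (simp add: norm_transpose power2_eq_square mult_left_mono)
    also have "\<dots> \<le> (norm (transpose D) * \<delta>)^2"
      using norm_gain_step_le[of j] g_pos by (intro power_mono) (simp_all add: F_def \<delta>_def)
    also have "\<dots> \<le> (norm (transpose D))^2 * trace (err 0) * \<delta>"
    proof -
      have "0 \<le> \<delta>" "\<delta> \<le> trace (err 0)"
        using trace_mono_psd[OF psd_err_diff, of j] trace_nonneg_psd[OF psd_err, of "Suc j"]
          trace_err_le_trace_err_0[of j] by (simp_all add: \<delta>_def)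
      then have "(norm (transpose D))^2 * (\<delta> * \<delta>) \<le> (norm (transpose D))^2 * (trace (err 0) * \<delta>)"
        by (intro mult_left_mono mult_right_mono) simp_all
      then show ?thesis
        by (simp add: power_mult_distrib power2_eq_square mult_ac)
    qed
    finally show ?thesis .
  qed
  then have "norm (g *\<^sub>R (transpose F ** F)) \<le> (norm (transpose D))^2 * trace (err 0) * \<delta> / g"
    using g_pos by (simp add: pos_le_divide_eq mult.commute)
  then have "real CARD('n) * norm (g *\<^sub>R (transpose F ** F)) / c
      \<le> real CARD('n) * ((norm (transpose D))^2 * trace (err 0) * \<delta> / g) / c"
    using c(1) by (intro divide_right_mono mult_left_mono) simp_all
  ultimately have "trace (err (Suc j)) \<le> real CARD('n) * ((norm (transpose D))^2 * trace (err 0) * \<delta> / g) / c"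
    by linarith
  then show ?thesis
    by (simp add: \<delta>_def field_simps)
qed

lemma trace_err_contraction:
  obtains \<beta> where "0 \<le> \<beta>" "\<beta> < 1" "\<And>j. trace (err (Suc j)) \<le> \<beta> * trace (err j)"
proof -
  obtain c where c: "c > 0" "\<And>Y. c * norm Y \<le> norm (lyap (AK + D ** LK) Y)"
    using linear_inj_bounded_below_pos[OF linear_lyap inj_lyap[OF hurwitz_LK]] by blast
  define \<kappa> where "\<kappa> = real CARD('n) * (norm (transpose D))^2 * trace (err 0) / (g * c)"
  have "0 \<le> \<kappa>"
    using g_pos c(1) trace_nonneg_psd[OF psd_err] by (simp add: \<kappa>_def)
  show ?thesis
  proof
    show "0 \<le> \<kappa> / (1 + \<kappa>)" "\<kappa> / (1 + \<kappa>) < 1"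
      using \<open>0 \<le> \<kappa>\<close> by simp_all
    fix j
    have "trace (err (Suc j)) \<le> \<kappa> * (trace (err j) - trace (err (Suc j)))"
      unfolding \<kappa>_def by (rule trace_err_Suc_le[OF c])
    then have "(1 + \<kappa>) * trace (err (Suc j)) \<le> \<kappa> * trace (err j)"
      by (simp add: algebra_simps)
    then show "trace (err (Suc j)) \<le> \<kappa> / (1 + \<kappa>) * trace (err j)"
      using \<open>0 \<le> \<kappa>\<close> by (simp add: field_simps)
  qed
qed

end

lemma scaleR_gain_square:
  fixes P :: "real^'n^'n" and D :: "real^'q^'n"
  assumes "symm P" "g \<noteq> 0"
  shows "g *\<^sub>R (transpose (inverse g *\<^sub>R (transpose D ** P)) ** (inverse g *\<^sub>R (transpose D ** P)))
    = inverse g *\<^sub>R (P ** D ** transpose D ** P)"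
proof -
  have "transpose (transpose D ** P) ** (transpose D ** P) = P ** D ** transpose D ** P"
    using assms(1) by (simp add: symm_def matrix_transpose_mul matrix_mul_assoc)
  then show ?thesis
    using assms(2) by (simp add: transpose_scalar matrix_scalar_ac flip: scalar_matrix_assoc)
qed

theorem theorem2:
  fixes A :: "real^'n^'n" and B :: "real^'m^'n" and C :: "real^'n^'p"
    and D :: "real^'q^'n" and E :: "real^'m^'p" and \<gamma> :: real
    and K :: "real^'n^'m" and PK :: "real^'n^'n" and L0 :: "real^'n^'q"
    and P :: "nat \<Rightarrow> real^'n^'n" and L :: "nat \<Rightarrow> real^'n^'q"
  assumes gamma: "\<gamma> > 0"
    and Qpd: "pos_def (transpose C ** C)"
    and EC: "transpose E ** C = 0"
    and Rpd: "pos_def (transpose E ** E)"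
    and K: "K \<in> Kset A B C D E \<gamma>"
    and PK_sym: "transpose PK = PK"
    and PK_pd: "pos_def PK"
    and PK_ARE: "transpose (A - B ** K) ** PK + PK ** (A - B ** K)
                 + (transpose C ** C + transpose K ** (transpose E ** E) ** K)
                 + (inverse (\<gamma>^2)) *\<^sub>R (PK ** D ** transpose D ** PK) = 0"
    and PK_stab: "hurwitz (A - B ** K + (inverse (\<gamma>^2)) *\<^sub>R (D ** transpose D ** PK))"
    and L0_stab: "hurwitz (A - B ** K + D ** L0)"
    and L_0: "L 0 = L0"
    and P_eq: "\<And>j. transpose (A - B ** K + D ** L j) ** P j + P j ** (A - B ** K + D ** L j)
                 + (transpose C ** C + transpose K ** (transpose E ** E) ** K)
                 - (\<gamma>^2) *\<^sub>R (transpose (L j) ** L j) = 0"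
    and L_Suc: "\<And>j. L (Suc j) = (inverse (\<gamma>^2)) *\<^sub>R (transpose D ** P j)"
  shows "\<exists>\<beta>::real. 0 \<le> \<beta> \<and> \<beta> < 1 \<and>
           (\<forall>j\<ge>1. trace (PK - P (Suc j)) \<le> \<beta> * trace (PK - P j))"
proof -
  define g where "g = \<gamma>^2"
  define AK where "AK = A - B ** K"
  define Q where "Q = transpose C ** C + transpose K ** (transpose E ** E) ** K"
  define LK where "LK = inverse g *\<^sub>R (transpose D ** PK)"
  interpret disturbance_iteration AK PK Q D LK g L P
  proof
    show "symm PK"
      using PK_sym by (simp add: symm_def)
    show "lyap AK PK + Q + g *\<^sub>R (transpose LK ** LK) = 0"
      using PK_ARE scaleR_gain_square[of PK g D] PK_sym gamma
      by (simp add: lyap_def AK_def Q_def LK_def g_def symm_def)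
    show "hurwitz (AK + D ** LK)"
      using PK_stab
      by (simp add: AK_def LK_def g_def matrix_scalar_ac matrix_mul_assoc flip: scalar_matrix_assoc)
  qed (use gamma L0_stab L_0 P_eq L_Suc in \<open>simp_all add: lyap_def AK_def Q_def LK_def g_def\<close>)
  show ?thesis
  proof (rule trace_err_contraction)
    fix \<beta> :: real
    assume "0 \<le> \<beta>" "\<beta> < 1" "\<And>j. trace (err (Suc j)) \<le> \<beta> * trace (err j)"
    then show ?thesis
      unfolding err_def by blast
  qed
qed

end
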